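(* Let $\Gamma$ be a Deza graph with parameters $(n,k,k-1,a)$, $k>1$, $\beta=1$. For an $NA$-vertex $x$, $(x')_b=(x_b)'$.
   Context: A Deza graph with parameters $(n,k,b,a)$, $a\le b$, is a $k$-regular graph on $n$ vertices in which any two distinct vertices have $a$ or $b$ common neighbours; $\beta$ is the number of vertices $u\ne v$ with exactly $b$ common neighbours with a given vertex $v$. Since $\beta=1$, for each vertex $x$ let $x_b$ denote the unique vertex having $b=k-1$ common neighbours with $x$. A vertex $x$ is an $A$-vertex if $x$ is adjacent to $x_b$, and an $NA$-vertex otherwise (if $x$ is $NA$ then so is $x_b$). For an $NA$-vertex $x$, $x'$ denotes the unique neighbour of $x$ not adjacent to $x_b$. *)

theory Defs
  imports Main
begin

definition simple_graph :: "'a set \<Rightarrow> ('a \<Rightarrow> 'a \<Rightarrow> bool) \<Rightarrow> bool" where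
  "simple_graph V E \<longleftrightarrow> finite V \<and> (\<forall>x y. E x y \<longrightarrow> x \<in> V \<and> y \<in> V)
     \<and> (\<forall>x y. E x y \<longrightarrow> E y x) \<and> (\<forall>x. \<not> E x x)"

definition nbrs :: "'a set \<Rightarrow> ('a \<Rightarrow> 'a \<Rightarrow> bool) \<Rightarrow> 'a \<Rightarrow> 'a set" where
  "nbrs V E x = {y \<in> V. E x y}"

definition common :: "'a set \<Rightarrow> ('a \<Rightarrow> 'a \<Rightarrow> bool) \<Rightarrow> 'a \<Rightarrow> 'a \<Rightarrow> nat" where
  "common V E x y = card (nbrs V E x \<inter> nbrs V E y)"

definition deza_graph :: "'a set \<Rightarrow> ('a \<Rightarrow> 'a \<Rightarrow> bool) \<Rightarrow> nat \<Rightarrow> nat \<Rightarrow> nat \<Rightarrow> nat \<Rightarrow> bool" where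
  "deza_graph V E n k b a \<longleftrightarrow> simple_graph V E \<and> card V = n \<and> a \<le> b
     \<and> (\<forall>x\<in>V. card (nbrs V E x) = k)
     \<and> (\<forall>x\<in>V. \<forall>y\<in>V. x \<noteq> y \<longrightarrow> common V E x y = a \<or> common V E x y = b)"

definition beta_at :: "'a set \<Rightarrow> ('a \<Rightarrow> 'a \<Rightarrow> bool) \<Rightarrow> nat \<Rightarrow> 'a \<Rightarrow> nat" where
  "beta_at V E b v = card {u \<in> V. u \<noteq> v \<and> common V E u v = b}"

definition xb :: "'a set \<Rightarrow> ('a \<Rightarrow> 'a \<Rightarrow> bool) \<Rightarrow> nat \<Rightarrow> 'a \<Rightarrow> 'a" where
  "xb V E b x = (THE u. u \<in> V \<and> u \<noteq> x \<and> common V E u x = b)"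

definition A_vertex :: "'a set \<Rightarrow> ('a \<Rightarrow> 'a \<Rightarrow> bool) \<Rightarrow> nat \<Rightarrow> 'a \<Rightarrow> bool" where
  "A_vertex V E b x \<longleftrightarrow> x \<in> V \<and> E x (xb V E b x)"

definition NA_vertex :: "'a set \<Rightarrow> ('a \<Rightarrow> 'a \<Rightarrow> bool) \<Rightarrow> nat \<Rightarrow> 'a \<Rightarrow> bool" where
  "NA_vertex V E b x \<longleftrightarrow> x \<in> V \<and> \<not> E x (xb V E b x)"

definition xprime :: "'a set \<Rightarrow> ('a \<Rightarrow> 'a \<Rightarrow> bool) \<Rightarrow> nat \<Rightarrow> 'a \<Rightarrow> 'a" where
  "xprime V E b x = (THE y. y \<in> V \<and> E x y \<and> \<not> E y (xb V E b x))"

end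

theory Submission
  imports Defs
begin

text \<open>Write \<open>\<sigma> u\<close> for \<open>u\<^sub>b\<close>. Since \<open>\<beta> = 1\<close>, \<open>\<sigma>\<close> is an involution and
  \<open>|\<Gamma>(u) \<inter> \<Gamma>(w)| = a + (k - a)[w = u] + (k - 1 - a)[w = \<sigma> u]\<close>.
  Counting the edges \<open>t \<sim> w\<close> with \<open>t \<in> \<Gamma>(u)\<close>, \<open>w \<in> \<Gamma>(v)\<close> in two ways therefore gives
  \<open>(k - a)[u \<sim> v] + (k - 1 - a)[\<sigma> u \<sim> v] = (k - a)[v \<sim> u] + (k - 1 - a)[\<sigma> v \<sim> u]\<close>,
  and since \<open>a < k - 1\<close> this means \<open>\<sigma> u \<sim> v \<longleftrightarrow> u \<sim> \<sigma> v\<close>. Applied to \<open>x'\<close>,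
  which is adjacent to \<open>x\<close> but not to \<open>\<sigma> x\<close>, this shows that \<open>\<sigma> x'\<close> is adjacent
  to \<open>\<sigma> x\<close> but not to \<open>\<sigma> (\<sigma> x) = x\<close>, i.e. \<open>\<sigma> x' = (\<sigma> x)'\<close>.\<close>

lemma common_commute: "common V E u w = common V E w u"
  by (simp add: common_def Int_commute)

lemma simple_graph_finite_nbrs: "simple_graph V E \<Longrightarrow> finite (nbrs V E u)"
  by (simp add: simple_graph_def nbrs_def)

lemma card_nbrs_Int_eq_sum:
  assumes "simple_graph V E"
  shows "card (nbrs V E u \<inter> nbrs V E w) = (\<Sum>t\<in>nbrs V E u. if E w t then 1 else 0)"
proof -
  have "nbrs V E u \<inter> nbrs V E w = nbrs V E u \<inter> {t. E w t}"
    by (auto simp: nbrs_def)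
  then show ?thesis
    using simple_graph_finite_nbrs[OF assms] by (simp add: sum.If_cases)
qed

lemma sum_common_nbrs_swap:
  assumes "simple_graph V E"
  shows "(\<Sum>w\<in>nbrs V E v. common V E u w) = (\<Sum>t\<in>nbrs V E u. common V E v t)"
proof -
  have sym: "E w t \<longleftrightarrow> E t w" for w t
    using assms by (auto simp: simple_graph_def)
  have "(\<Sum>w\<in>nbrs V E v. common V E u w)
      = (\<Sum>w\<in>nbrs V E v. \<Sum>t\<in>nbrs V E u. if E w t then 1 else 0)"
    unfolding common_def card_nbrs_Int_eq_sum[OF assms] ..
  also have "\<dots> = (\<Sum>t\<in>nbrs V E u. \<Sum>w\<in>nbrs V E v. if E t w then 1 else 0)"
    by (subst sum.swap) (simp add: sym)
  also have "\<dots> = (\<Sum>t\<in>nbrs V E u. common V E v t)"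
    unfolding common_def card_nbrs_Int_eq_sum[OF assms] ..
  finally show ?thesis .
qed

locale deza_beta_one =
  fixes V :: "'a set" and E :: "'a \<Rightarrow> 'a \<Rightarrow> bool" and n k a :: nat
  assumes deza: "deza_graph V E n k (k - 1) a"
    and k_gt_1: "k > 1"
    and beta_one: "\<forall>v\<in>V. beta_at V E (k - 1) v = 1"
begin

abbreviation \<sigma> where "\<sigma> \<equiv> xb V E (k - 1)"
abbreviation \<pi> where "\<pi> \<equiv> xprime V E (k - 1)"

lemma graph: "simple_graph V E"
  using deza by (simp add: deza_graph_def)

lemma adj_sym: "E x y \<Longrightarrow> E y x"
  and adj_in_V: "E x y \<Longrightarrow> x \<in> V \<and> y \<in> V"
  and adj_irrefl: "\<not> E x x"
  using graph by (auto simp: simple_graph_def)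

lemma card_nbrs: "u \<in> V \<Longrightarrow> card (nbrs V E u) = k"
  and a_le: "a \<le> k - 1"
  and common_cases: "u \<in> V \<Longrightarrow> w \<in> V \<Longrightarrow> u \<noteq> w \<Longrightarrow> common V E u w = a \<or> common V E u w = k - 1"
  using deza by (simp_all add: deza_graph_def)

lemma b_partners_eq:
  assumes "u \<in> V"
  shows "{w \<in> V. w \<noteq> u \<and> common V E w u = k - 1} = {\<sigma> u}"
proof -
  obtain z where z: "{w \<in> V. w \<noteq> u \<and> common V E w u = k - 1} = {z}"
    using beta_one assms unfolding beta_at_def by (metis card_1_singletonE)
  then have "\<sigma> u = z"
    unfolding xb_def by (intro the_equality) blast+
  with z show ?thesis by simp
qed

lemma \<sigma>_props:
  assumes "u \<in> V"
  shows "\<sigma> u \<in> V" "\<sigma> u \<noteq> u" "common V E u (\<sigma> u) = k - 1"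
proof -
  have "\<sigma> u \<in> {w \<in> V. w \<noteq> u \<and> common V E w u = k - 1}"
    using b_partners_eq[OF assms] by simp
  then show "\<sigma> u \<in> V" "\<sigma> u \<noteq> u" "common V E u (\<sigma> u) = k - 1"
    by (simp_all add: common_commute)
qed

lemma \<sigma>_eqI: "u \<in> V \<Longrightarrow> w \<in> V \<Longrightarrow> w \<noteq> u \<Longrightarrow> common V E w u = k - 1 \<Longrightarrow> w = \<sigma> u"
  using b_partners_eq by blast

lemma \<sigma>_\<sigma>: "u \<in> V \<Longrightarrow> \<sigma> (\<sigma> u) = u"
  using \<sigma>_props[of u] \<sigma>_props[of "\<sigma> u"] \<sigma>_eqI[of "\<sigma> u" u] by simp

lemma a_less: "u \<in> V \<Longrightarrow> a < k - 1"
proof (rule ccontr)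
  assume u: "u \<in> V" and "\<not> a < k - 1"
  then have "a = k - 1"
    using a_le by simp
  have "nbrs V E u \<subseteq> {w \<in> V. w \<noteq> u \<and> common V E w u = k - 1}"
  proof
    fix w assume "w \<in> nbrs V E u"
    then have "w \<in> V" "w \<noteq> u"
      using adj_irrefl by (auto simp: nbrs_def)
    with u \<open>a = k - 1\<close> show "w \<in> {w \<in> V. w \<noteq> u \<and> common V E w u = k - 1}"
      using common_cases by auto
  qed
  then have "card (nbrs V E u) \<le> card {\<sigma> u}"
    using b_partners_eq[OF u] by (intro card_mono) simp_all
  with card_nbrs[OF u] k_gt_1 show False by simp
qed

lemma common_eq:
  assumes "u \<in> V" "w \<in> V"
  shows "common V E u w = a + (if w = u then k - a else 0) + (if w = \<sigma> u then k - 1 - a else 0)"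
proof -
  consider "w = u" | "w = \<sigma> u" | "w \<noteq> u" "w \<noteq> \<sigma> u" by blast
  then show ?thesis
  proof cases
    case 1
    then show ?thesis
      using card_nbrs[OF assms(1)] a_le \<sigma>_props[OF assms(1)]
      by (simp add: common_def)
  next
    case 2
    then show ?thesis
      using \<sigma>_props[OF assms(1)] a_le by simp
  next
    case 3
    then have "common V E u w \<noteq> k - 1"
      using \<sigma>_eqI[OF assms(1,2)] common_commute by metis
    then show ?thesis
      using 3 common_cases[OF assms] by auto
  qed
qed

lemma sum_common_nbrs:
  assumes "u \<in> V" "v \<in> V"
  shows "(\<Sum>w\<in>nbrs V E v. common V E u w)
       = a * k + (if E v u then k - a else 0) + (if E v (\<sigma> u) then k - 1 - a else 0)"
proof -
  have "(\<Sum>w\<in>nbrs V E v. common V E u w)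
      = (\<Sum>w\<in>nbrs V E v. a + (if w = u then k - a else 0) + (if w = \<sigma> u then k - 1 - a else 0))"
    using common_eq assms by (intro sum.cong) (auto simp: nbrs_def)
  also have "\<dots> = a * card (nbrs V E v) + (\<Sum>w\<in>nbrs V E v. if w = u then k - a else 0)
      + (\<Sum>w\<in>nbrs V E v. if w = \<sigma> u then k - 1 - a else 0)"
    by (simp add: sum.distrib)
  also have "\<dots> = a * k + (if E v u then k - a else 0) + (if E v (\<sigma> u) then k - 1 - a else 0)"
    using card_nbrs[OF assms(2)] simple_graph_finite_nbrs[OF graph]
    by (simp add: sum.delta nbrs_def adj_in_V)
  finally show ?thesis .
qed

lemma adj_\<sigma>_swap:
  assumes "u \<in> V" "v \<in> V"
  shows "E (\<sigma> u) v \<longleftrightarrow> E u (\<sigma> v)"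
proof -
  have "E v u \<longleftrightarrow> E u v"
    using adj_sym by blast
  then have "(if E v (\<sigma> u) then k - 1 - a else 0) = (if E u (\<sigma> v) then k - 1 - a else 0)"
    using sum_common_nbrs_swap[OF graph, of v u]
    unfolding sum_common_nbrs[OF assms] sum_common_nbrs[OF assms(2,1)] by simp
  then show ?thesis
    using a_less[OF assms(1)] adj_sym by (auto split: if_splits)
qed

lemma nbrs_diff_nbrs_\<sigma>:
  assumes "u \<in> V"
  shows "nbrs V E u - nbrs V E (\<sigma> u) = {\<pi> u}"
proof -
  have "card (nbrs V E u - nbrs V E (\<sigma> u)) = card (nbrs V E u) - common V E u (\<sigma> u)"
    using simple_graph_finite_nbrs[OF graph] by (simp add: card_Diff_subset_Int common_def)
  also have "\<dots> = 1"
    using card_nbrs[OF assms] \<sigma>_props[OF assms] k_gt_1 by simp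
  finally obtain p where p: "nbrs V E u - nbrs V E (\<sigma> u) = {p}"
    using card_1_singletonE by blast
  have "{y. y \<in> V \<and> E u y \<and> \<not> E y (\<sigma> u)} = nbrs V E u - nbrs V E (\<sigma> u)"
    by (auto simp: nbrs_def dest: adj_sym)
  then have "\<pi> u = p"
    unfolding xprime_def using p by (intro the_equality) blast+
  with p show ?thesis by simp
qed

lemma \<pi>_props:
  assumes "u \<in> V"
  shows "E u (\<pi> u)" "\<not> E (\<pi> u) (\<sigma> u)"
proof -
  have "\<pi> u \<in> nbrs V E u - nbrs V E (\<sigma> u)"
    using nbrs_diff_nbrs_\<sigma>[OF assms] by simp
  then show "E u (\<pi> u)" "\<not> E (\<pi> u) (\<sigma> u)"
    by (auto simp: nbrs_def intro: adj_sym)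
qed

lemma \<pi>_eqI:
  assumes "u \<in> V" "E u y" "\<not> E y (\<sigma> u)"
  shows "y = \<pi> u"
proof -
  have "y \<in> nbrs V E u - nbrs V E (\<sigma> u)"
    using assms adj_in_V adj_sym by (auto simp: nbrs_def)
  then show ?thesis
    using nbrs_diff_nbrs_\<sigma>[OF assms(1)] by blast
qed

lemma \<sigma>_\<pi>_commute:
  assumes "x \<in> V"
  shows "\<sigma> (\<pi> x) = \<pi> (\<sigma> x)"
proof (rule \<pi>_eqI)
  have p: "\<pi> x \<in> V" "E x (\<pi> x)" "\<not> E (\<pi> x) (\<sigma> x)"
    using \<pi>_props[OF assms] adj_in_V by auto
  show "\<sigma> x \<in> V" using \<sigma>_props[OF assms] by simp
  show "E (\<sigma> x) (\<sigma> (\<pi> x))"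
    using adj_\<sigma>_swap[OF p(1) \<open>\<sigma> x \<in> V\<close>] p(2) \<sigma>_\<sigma>[OF assms] adj_sym by simp
  show "\<not> E (\<sigma> (\<pi> x)) (\<sigma> (\<sigma> x))"
    using adj_\<sigma>_swap[OF p(1) assms] p(3) \<sigma>_\<sigma>[OF assms] by simp
qed

end

theorem lemma12:
  fixes V :: "'a set" and E :: "'a \<Rightarrow> 'a \<Rightarrow> bool" and n k a :: nat and x :: 'a
  assumes "deza_graph V E n k (k - 1) a"
    and "k > 1"
    and "\<forall>v\<in>V. beta_at V E (k - 1) v = 1"
    and "NA_vertex V E (k - 1) x"
  shows "xb V E (k - 1) (xprime V E (k - 1) x) = xprime V E (k - 1) (xb V E (k - 1) x)"
proof -
  interpret deza_beta_one V E n k a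
    using assms(1-3) by unfold_locales
  \<comment> \<open>Being an NA-vertex only supplies \<open>x \<in> V\<close>: the identity holds at every vertex.\<close>
  have "x \<in> V" using assms(4) by (simp add: NA_vertex_def)
  then show ?thesis by (rule \<sigma>_\<pi>_commute)
qed

end
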